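(* Let $q\equiv 1\pmod 6$ be a prime power, let $\rho$ be a primitive element of $\mathbb F_q$, and let $\pi:(\mathbb Z_2^2)^*\to\mathbb Z_3$ be a bijection. Suppose $c=c^3_q(1,2)$ is odd and $l=(c+1)/2$. Then $\Gamma=\operatorname{Cay}(G_{l,2,q},S(\pi))$ is not strongly regular.
   Context: For an additive group $A$, $A^*=A\setminus\{0\}$. $G_{l,2,q}=\mathbb Z_l\oplus\mathbb Z_2^2\oplus\mathbb F_q$. $S_0=\{(g,0): g\in(\mathbb Z_l\oplus\mathbb Z_2^2)^*\}$; for $z\in(\mathbb Z_2^2)^*$, $S_{z,\pi}=\{(0,z,\rho^j): j\in\mathbb Z,\ j\equiv\pi(z)\pmod 3\}$; $S(\pi)=S_0\cup\bigcup_z S_{z,\pi}$; $\operatorname{Cay}(G_{l,2,q},S(\pi))$ has vertex set $G_{l,2,q}$ with $x\sim y$ iff $y-x\in S(\pi)$. Write $q=6r+1$; $C^3_q(i)=\{\rho^{3j+i}:0\le j\le 2r-1\}$ for $i\in\mathbb Z_3$, $c^3_q(a,b)=|(C^3_q(a)+1)\cap C^3_q(b)|$. A graph is strongly regular if it is non-empty, regular, every two adjacent vertices have a constant number $\lambda$ of common neighbours, and every two distinct non-adjacent vertices have a constant number $\mu$ of common neighbours. *)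

theory Defs
  imports Main
begin

(* Elements of G_{l,2,q} = Z_l (+) Z_2^2 (+) F_q are triples (a, z, u):
   a \<in> {0..<l} represents Z_l, z :: bool \<times> bool represents Z_2^2
   (addition = componentwise xor, zero = (False, False)), u :: 'a is in the
   finite field 'a with CARD('a) = q. *)
type_synonym 'a gvtx = "nat \<times> (bool \<times> bool) \<times> 'a"

definition z2zero :: "bool \<times> bool" where
  "z2zero = (False, False)"

definition G_carrier :: "nat \<Rightarrow> ('a::{finite,field}) gvtx set" where
  "G_carrier l = {0..<l} \<times> UNIV \<times> UNIV"

fun G_minus :: "nat \<Rightarrow> ('a::{finite,field}) gvtx \<Rightarrow> 'a gvtx \<Rightarrow> 'a gvtx" where
  "G_minus l (a, (z1, z2), u) (b, (w1, w2), v) =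
     ((a + l - b) mod l, (z1 \<noteq> w1, z2 \<noteq> w2), u - v)"

definition S0 :: "nat \<Rightarrow> ('a::{finite,field}) gvtx set" where
  "S0 l = {(a, z, 0) | a z. a < l \<and> (a, z) \<noteq> (0, z2zero)}"

(* S_{z,\<pi>} = {(0, z, \<rho>^j) : j \<in> Z, j \<equiv> \<pi>(z) mod 3};  \<pi>(z) \<in> {0,1,2} represents Z_3 *)
definition Sz :: "'a::{finite,field} \<Rightarrow> (bool \<times> bool \<Rightarrow> nat) \<Rightarrow> bool \<times> bool \<Rightarrow> 'a gvtx set" where
  "Sz \<rho> \<pi> z = {(0, z, \<rho> powi j) | j::int. j mod 3 = int (\<pi> z) mod 3}"

definition S_pi :: "nat \<Rightarrow> 'a::{finite,field} \<Rightarrow> (bool \<times> bool \<Rightarrow> nat) \<Rightarrow> 'a gvtx set" where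
  "S_pi l \<rho> \<pi> = S0 l \<union> (\<Union>z \<in> {z. z \<noteq> z2zero}. Sz \<rho> \<pi> z)"

definition cay_adj :: "nat \<Rightarrow> 'a::{finite,field} \<Rightarrow> (bool \<times> bool \<Rightarrow> nat) \<Rightarrow> 'a gvtx \<Rightarrow> 'a gvtx \<Rightarrow> bool" where
  "cay_adj l \<rho> \<pi> x y \<longleftrightarrow> G_minus l y x \<in> S_pi l \<rho> \<pi>"

definition primitive_element :: "'a::{finite,field} \<Rightarrow> bool" where
  "primitive_element \<rho> \<longleftrightarrow> \<rho> \<noteq> 0 \<and> (\<forall>x. x \<noteq> 0 \<longrightarrow> (\<exists>j::nat. x = \<rho> ^ j))"

(* cyclotomic classes of order 3: C^3_q(i) = {\<rho>^(3j+i) : 0 \<le> j \<le> 2r-1}, q = 6r+1 *)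
definition cyc_class :: "nat \<Rightarrow> 'a::{finite,field} \<Rightarrow> nat \<Rightarrow> 'a set" where
  "cyc_class q \<rho> i = {\<rho> ^ (3 * j + i) | j. j < 2 * ((q - 1) div 6)}"

definition cyc_number :: "nat \<Rightarrow> 'a::{finite,field} \<Rightarrow> nat \<Rightarrow> nat \<Rightarrow> nat" where
  "cyc_number q \<rho> a b = card ((\<lambda>x. x + 1) ` cyc_class q \<rho> a \<inter> cyc_class q \<rho> b)"

definition strongly_regular :: "'v set \<Rightarrow> ('v \<Rightarrow> 'v \<Rightarrow> bool) \<Rightarrow> bool" where
  "strongly_regular V E \<longleftrightarrow>
     (\<exists>x\<in>V. \<exists>y\<in>V. E x y) \<and>
     (\<exists>k lam mu :: nat.
        (\<forall>x\<in>V. card {y\<in>V. E x y} = k) \<and>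
        (\<forall>x\<in>V. \<forall>y\<in>V. E x y \<longrightarrow> card {w\<in>V. E x w \<and> E y w} = lam) \<and>
        (\<forall>x\<in>V. \<forall>y\<in>V. x \<noteq> y \<and> \<not> E x y \<longrightarrow> card {w\<in>V. E x w \<and> E y w} = mu))"

end

theory Submission
  imports Defs "HOL-Library.Cardinality"
begin

(*
  Let z0 be the non-zero element of Z_2^2 with \<pi> z0 = 0 and let u be a non-cube of F_q.
  The vertices 0 and (0, z0, u) are not adjacent, and a common neighbour of them is determined
  by its F_q-coordinate t, which ranges over 0, u and those t for which t and t - u lie in the
  two different non-trivial cubic classes. Hence the number of common neighbours is
  2 + c(1,0) + c(0,1) for u in C(1) and 2 + c(2,0) + c(0,2) for u in C(2), where c(a,b) are
  the cyclotomic numbers of order 3. In a strongly regular graph these agree. Combined with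
  c(a,b) = c(b,a) (as -1 is a cube), c(a,b) = c(-a,b-a) (via x \<mapsto> 1/x) and
  c(2,0) + c(2,1) + c(2,2) = (q-1)/3, this gives c(1,2) = c(2,1) = (q-1)/3 - 2 c(2,0), which
  is even. The value of l only enters through l > 0.
*)

lemma power_card_minus_one_eq_one:
  fixes x :: "'a::{finite,field}"
  assumes "x \<noteq> 0"
  shows "x ^ (CARD('a) - 1) = 1"
proof -
  define N where "N = UNIV - {0::'a}"
  have "inj_on (\<lambda>y. x * y) N" using assms by (auto simp: inj_on_def)
  moreover have "(\<lambda>y. x * y) ` N = N"
  proof
    show "(\<lambda>y. x * y) ` N \<subseteq> N" using assms by (auto simp: N_def)
    show "N \<subseteq> (\<lambda>y. x * y) ` N"
    proof
      fix y assume "y \<in> N"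
      then have "y = x * (y / x)" "y / x \<in> N" using assms by (auto simp: N_def)
      then show "y \<in> (\<lambda>y. x * y) ` N" by blast
    qed
  qed
  ultimately have "prod (\<lambda>y. y) N = prod (\<lambda>y. x * y) N"
    using prod.reindex[of "\<lambda>y. x * y" N "\<lambda>y. y"] by simp
  also have "\<dots> = x ^ card N * prod (\<lambda>y. y) N" by (simp add: prod.distrib)
  finally have "x ^ card N * prod (\<lambda>y. y) N = 1 * prod (\<lambda>y. y) N" by simp
  moreover have "prod (\<lambda>y. y) N \<noteq> 0" by (simp add: N_def)
  ultimately have "x ^ card N = 1" by simp
  then show ?thesis by (simp add: N_def card_Diff_singleton)
qed

lemma nat_less_three_iff: "(n::nat) < 3 \<longleftrightarrow> n = 0 \<or> n = 1 \<or> n = 2"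
  by arith

lemma one_less_card_field: "1 < CARD('a::{finite,field})"
proof -
  have "card {0::'a, 1} \<le> CARD('a)" by (rule card_mono) auto
  then show ?thesis by simp
qed

lemma card_eq_if_involution:
  assumes "\<And>x. f (f x) = x" "f ` A \<subseteq> B" "f ` B \<subseteq> A"
  shows "card A = card B"
proof -
  have "f ` A = B"
  proof
    show "B \<subseteq> f ` A"
    proof
      fix y assume "y \<in> B"
      then have "f y \<in> A" "y = f (f y)" using assms by auto
      then show "y \<in> f ` A" by blast
    qed
  qed (fact assms(2))
  moreover have "inj f" by (metis assms(1) injI)
  ultimately show ?thesis by (metis card_image inj_on_subset subset_UNIV)
qed

locale primitive_root =
  fixes \<rho> :: "'a::{finite,field}"
  assumes primitive: "primitive_element \<rho>"
begin

definition order :: nat where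
  "order = card (range (\<lambda>n. \<rho> ^ n))"

lemma root_nonzero: "\<rho> \<noteq> 0"
  using primitive by (simp add: primitive_element_def)

lemma range_power_eq: "range (\<lambda>n. \<rho> ^ n) = UNIV - {0}"
  using primitive by (auto simp: primitive_element_def)

lemma order_eq: "order = CARD('a) - 1"
  by (simp add: order_def range_power_eq card_Diff_singleton)

lemma order_pos: "0 < order"
  using one_less_card_field[where 'a='a] by (simp add: order_eq)

lemma power_order: "\<rho> ^ order = 1"
  unfolding order_eq by (rule power_card_minus_one_eq_one[OF root_nonzero])

lemma ex_power_eq: "x \<noteq> 0 \<Longrightarrow> \<exists>n. x = \<rho> ^ n"
  using primitive by (simp add: primitive_element_def)

lemma power_mod_order: "\<rho> ^ (n mod order) = \<rho> ^ n"
proof -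
  have "\<rho> ^ n = \<rho> ^ (n mod order) * (\<rho> ^ order) ^ (n div order)"
    by (metis mod_div_mult_eq power_add power_mult mult.commute)
  then show ?thesis by (simp add: power_order)
qed

lemma power_eq_power_iff: "\<rho> ^ m = \<rho> ^ n \<longleftrightarrow> m mod order = n mod order"
proof -
  have "(\<lambda>k. \<rho> ^ k) ` {..<order} = range (\<lambda>k. \<rho> ^ k)"
  proof
    show "range (\<lambda>k. \<rho> ^ k) \<subseteq> (\<lambda>k. \<rho> ^ k) ` {..<order}"
    proof
      fix x assume "x \<in> range (\<lambda>k. \<rho> ^ k)"
      then obtain n where "x = \<rho> ^ (n mod order)" by (auto simp: power_mod_order)
      with order_pos show "x \<in> (\<lambda>k. \<rho> ^ k) ` {..<order}" by auto
    qed
  qed auto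
  then have "inj_on (\<lambda>k. \<rho> ^ k) {..<order}"
    by (intro eq_card_imp_inj_on) (simp_all add: order_def)
  then have "\<rho> ^ (m mod order) = \<rho> ^ (n mod order) \<longleftrightarrow> m mod order = n mod order"
    using order_pos by (auto dest: inj_onD)
  then show ?thesis by (simp only: power_mod_order)
qed

end

locale cubic_residues = primitive_root \<rho> for \<rho> :: "'a::{finite,field}" +
  assumes three_dvd_card_minus_one: "3 dvd CARD('a) - 1"
begin

lemma three_dvd_order: "3 dvd order"
  using three_dvd_card_minus_one by (simp add: order_eq)

(* The discrete logarithm modulo 3; its value at 0 is arbitrary. *)
definition cubic_index :: "'a \<Rightarrow> nat" where
  "cubic_index x = (SOME n. x = \<rho> ^ n) mod 3"

definition cubic_coset :: "nat \<Rightarrow> 'a set" where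
  "cubic_coset i = {x. x \<noteq> 0 \<and> cubic_index x = i}"

lemma cubic_index_less: "cubic_index x < 3"
  by (simp add: cubic_index_def)

lemma cubic_index_power: "cubic_index (\<rho> ^ n) = n mod 3"
proof -
  have "\<rho> ^ n = \<rho> ^ (SOME m. \<rho> ^ n = \<rho> ^ m)" by (rule someI) (rule refl)
  then have "(SOME m. \<rho> ^ n = \<rho> ^ m) mod order mod 3 = n mod order mod 3"
    by (simp only: power_eq_power_iff)
  then show ?thesis unfolding cubic_index_def by (metis mod_mod_cancel three_dvd_order)
qed

lemma cubic_index_mult:
  assumes "x \<noteq> 0" "y \<noteq> 0"
  shows "cubic_index (x * y) = (cubic_index x + cubic_index y) mod 3"
proof -
  obtain m n where "x = \<rho> ^ m" "y = \<rho> ^ n" using ex_power_eq assms by metis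
  then show ?thesis by (simp add: cubic_index_power mod_add_eq flip: power_add)
qed

lemma cubic_index_one: "cubic_index 1 = 0"
  using cubic_index_power[of 0] by simp

lemma cubic_index_minus_one: "cubic_index (-1) = 0"
proof -
  obtain n where "\<rho> ^ n = -1" using ex_power_eq[of "-1"] by auto
  then have "\<rho> ^ (n * 3) = -1" by (simp add: power_mult)
  then show ?thesis using cubic_index_power[of "n * 3"] by simp
qed

lemma cubic_index_minus: "x \<noteq> 0 \<Longrightarrow> cubic_index (- x) = cubic_index x"
  using cubic_index_mult[of "-1" x] cubic_index_minus_one cubic_index_less[of x] by simp

lemma cubic_index_inverse:
  assumes "x \<noteq> 0"
  shows "cubic_index (inverse x) = (3 - cubic_index x) mod 3"
proof -
  have "(cubic_index x + cubic_index (inverse x)) mod 3 = 0"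
    using cubic_index_mult[of x "inverse x"] cubic_index_one assms by simp
  then show ?thesis
    using cubic_index_less[of x] cubic_index_less[of "inverse x"]
    unfolding nat_less_three_iff by (elim disjE) simp_all
qed

lemma mult_mem_cubic_coset_iff:
  assumes "u \<noteq> 0" "a < 3"
  shows "u * x \<in> cubic_coset ((a + cubic_index u) mod 3) \<longleftrightarrow> x \<in> cubic_coset a"
proof (cases "x = 0")
  case False
  then have "cubic_index (u * x) = (cubic_index x + cubic_index u) mod 3"
    using assms cubic_index_mult[of u x] by (simp add: add.commute)
  then have "cubic_index (u * x) = (a + cubic_index u) mod 3 \<longleftrightarrow> cubic_index x = a"
    using assms(2) cubic_index_less[of x] cubic_index_less[of u]
    unfolding nat_less_three_iff by (elim disjE) simp_all
  with assms False show ?thesis by (simp add: cubic_coset_def)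
qed (simp add: cubic_coset_def)

lemma cubic_coset_eq_image:
  assumes "i < 3"
  shows "cubic_coset i = (\<lambda>j. \<rho> ^ (3 * j + i)) ` {..<order div 3}"
proof
  show "cubic_coset i \<subseteq> (\<lambda>j. \<rho> ^ (3 * j + i)) ` {..<order div 3}"
  proof
    fix x assume x: "x \<in> cubic_coset i"
    then obtain n where n: "x = \<rho> ^ (n mod order)"
      using ex_power_eq power_mod_order by (force simp: cubic_coset_def)
    define m where "m = n mod order"
    obtain k where k: "order = 3 * k" using three_dvd_order by blast
    have "m < order" using order_pos by (simp add: m_def)
    then have "m div 3 < order div 3" unfolding k by simp
    moreover have "m mod 3 = i"
      using x n cubic_index_power[of m] by (simp add: cubic_coset_def m_def)
    then have "x = \<rho> ^ (3 * (m div 3) + i)"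
      using n m_def by (metis div_mult_mod_eq mult.commute)
    ultimately show "x \<in> (\<lambda>j. \<rho> ^ (3 * j + i)) ` {..<order div 3}" by blast
  qed
  show "(\<lambda>j. \<rho> ^ (3 * j + i)) ` {..<order div 3} \<subseteq> cubic_coset i"
    using assms root_nonzero by (auto simp: cubic_coset_def cubic_index_power)
qed

lemma card_cubic_coset:
  assumes "i < 3"
  shows "card (cubic_coset i) = order div 3"
proof -
  obtain k where k: "order = 3 * k" using three_dvd_order by blast
  have "3 * j + i < order" if "j < order div 3" for j
    using that assms unfolding k by simp
  then have "inj_on (\<lambda>j. \<rho> ^ (3 * j + i)) {..<order div 3}"
    by (intro inj_onI) (simp add: power_eq_power_iff)
  then show ?thesis by (simp add: cubic_coset_eq_image[OF assms] card_image)
qed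


definition cyclotomic_pairs :: "nat \<Rightarrow> nat \<Rightarrow> 'a set" where
  "cyclotomic_pairs a b = {x. x \<in> cubic_coset a \<and> x + 1 \<in> cubic_coset b}"

lemma minus_mem_cubic_coset_iff: "- x \<in> cubic_coset i \<longleftrightarrow> x \<in> cubic_coset i"
  by (cases "x = 0") (simp_all add: cubic_coset_def cubic_index_minus)

lemma card_cyclotomic_pairs_commute:
  "card (cyclotomic_pairs a b) = card (cyclotomic_pairs b a)"
proof (rule card_eq_if_involution[of "\<lambda>x. - 1 - x"])
  have "- 1 - x \<in> cyclotomic_pairs b a" if "x \<in> cyclotomic_pairs a b" for a b x
  proof -
    have e: "- 1 - x = - (x + 1)" "- 1 - x + 1 = - x" by simp_all
    show ?thesis
      unfolding cyclotomic_pairs_def mem_Collect_eq e(2) unfolding e(1) minus_mem_cubic_coset_iff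
      using that by (simp add: cyclotomic_pairs_def)
  qed
  then show "(\<lambda>x. - 1 - x) ` cyclotomic_pairs a b \<subseteq> cyclotomic_pairs b a"
    "(\<lambda>x. - 1 - x) ` cyclotomic_pairs b a \<subseteq> cyclotomic_pairs a b" by blast+
qed simp

lemma inverse_mem_cyclotomic_pairs:
  assumes "x \<in> cyclotomic_pairs a b"
  shows "inverse x \<in> cyclotomic_pairs ((3 - a) mod 3) ((b + 3 - a) mod 3)"
proof -
  have x: "x \<noteq> 0" "x + 1 \<noteq> 0" "cubic_index x = a" "cubic_index (x + 1) = b"
    using assms by (auto simp: cyclotomic_pairs_def cubic_coset_def)
  have e: "inverse x + 1 = (x + 1) * inverse x" using x by (simp add: field_simps)
  then have "inverse x + 1 \<noteq> 0" using x by simp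
  have "cubic_index (inverse x + 1) = (b + (3 - a) mod 3) mod 3"
    unfolding e using x cubic_index_mult[of "x + 1" "inverse x"] cubic_index_inverse by simp
  also have "\<dots> = (b + 3 - a) mod 3"
    using x(3) cubic_index_less[of x] unfolding nat_less_three_iff by (elim disjE) simp_all
  finally show ?thesis
    using x \<open>inverse x + 1 \<noteq> 0\<close> cubic_index_inverse by (auto simp: cyclotomic_pairs_def cubic_coset_def)
qed

lemma card_cyclotomic_pairs_inverse:
  assumes "a < 3" "b < 3"
  shows "card (cyclotomic_pairs a b) = card (cyclotomic_pairs ((3 - a) mod 3) ((b + 3 - a) mod 3))"
proof (rule card_eq_if_involution[of inverse])
  have "(3 - (3 - a) mod 3) mod 3 = a" "((b + 3 - a) mod 3 + 3 - (3 - a) mod 3) mod 3 = b"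
    using assms unfolding nat_less_three_iff by (elim disjE; simp)+
  then show "inverse ` cyclotomic_pairs ((3 - a) mod 3) ((b + 3 - a) mod 3) \<subseteq> cyclotomic_pairs a b"
    using inverse_mem_cyclotomic_pairs by (metis image_subsetI)
qed (use inverse_mem_cyclotomic_pairs in auto)

lemma card_cyclotomic_pairs_row:
  assumes "a \<noteq> 0" "a < 3"
  shows "card (cyclotomic_pairs a 0) + card (cyclotomic_pairs a 1) + card (cyclotomic_pairs a 2)
    = order div 3"
proof -
  have "x + 1 \<noteq> 0" if "x \<in> cubic_coset a" for x
  proof -
    have "x \<noteq> - 1" using that assms cubic_index_minus_one by (auto simp: cubic_coset_def)
    then show ?thesis by (metis eq_neg_iff_add_eq_0)
  qed
  then have "cubic_coset a = cyclotomic_pairs a 0 \<union> cyclotomic_pairs a 1 \<union> cyclotomic_pairs a 2"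
    using cubic_index_less by (auto simp: cyclotomic_pairs_def cubic_coset_def nat_less_three_iff)
  moreover have "cyclotomic_pairs a i \<inter> cyclotomic_pairs a j = {}" if "i \<noteq> j" for i j
    using that by (auto simp: cyclotomic_pairs_def cubic_coset_def)
  ultimately have "card (cubic_coset a)
    = card (cyclotomic_pairs a 0) + card (cyclotomic_pairs a 1) + card (cyclotomic_pairs a 2)"
    by (simp add: card_Un_disjoint Int_Un_distrib2)
  with card_cubic_coset[OF assms(2)] show ?thesis by simp
qed

lemma even_cyclotomic_number_1_2:
  assumes "card (cyclotomic_pairs 1 0) + card (cyclotomic_pairs 0 1)
      = card (cyclotomic_pairs 2 0) + card (cyclotomic_pairs 0 2)"
    and "even (order div 3)"
  shows "even (card (cyclotomic_pairs 1 2))"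
proof -
  have "card (cyclotomic_pairs 2 0) = card (cyclotomic_pairs 1 0)"
    using assms(1) card_cyclotomic_pairs_commute[of 0 1] card_cyclotomic_pairs_commute[of 0 2]
    by simp
  moreover have "card (cyclotomic_pairs 2 2) = card (cyclotomic_pairs 1 0)"
    using card_cyclotomic_pairs_inverse[of 1 0] by simp
  ultimately have "order div 3 = 2 * card (cyclotomic_pairs 1 0) + card (cyclotomic_pairs 2 1)"
    using card_cyclotomic_pairs_row[of 2] by simp
  then show ?thesis using assms(2) card_cyclotomic_pairs_commute[of 1 2] by simp
qed

definition shifted_pairs :: "'a \<Rightarrow> nat \<Rightarrow> nat \<Rightarrow> 'a set" where
  "shifted_pairs u i j = {t. t \<in> cubic_coset i \<and> t - u \<in> cubic_coset j}"

lemma card_shifted_pairs: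
  assumes "u \<noteq> 0" "a < 3" "b < 3"
  shows "card (shifted_pairs u ((a + cubic_index u) mod 3) ((b + cubic_index u) mod 3))
    = card (cyclotomic_pairs b a)"
proof -
  let ?f = "\<lambda>x. u * (x + 1)"
  have "shifted_pairs u ((a + cubic_index u) mod 3) ((b + cubic_index u) mod 3)
      = ?f ` cyclotomic_pairs b a"
  proof (intro equalityI subsetI)
    fix t assume t: "t \<in> shifted_pairs u ((a + cubic_index u) mod 3) ((b + cubic_index u) mod 3)"
    have "t = ?f (t / u - 1)" "t - u = u * (t / u - 1)" using assms(1)
      by (simp_all add: field_simps)
    with t show "t \<in> ?f ` cyclotomic_pairs b a"
      using mult_mem_cubic_coset_iff[OF assms(1,2)] mult_mem_cubic_coset_iff[OF assms(1,3)]
      unfolding shifted_pairs_def cyclotomic_pairs_def by (metis (no_types, lifting) image_eqI mem_Collect_eq)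
  next
    fix t assume "t \<in> ?f ` cyclotomic_pairs b a"
    then obtain x where "x \<in> cyclotomic_pairs b a" "t = ?f x" by blast
    moreover have "u * (x + 1) - u = u * x" by (simp add: algebra_simps)
    ultimately show "t \<in> shifted_pairs u ((a + cubic_index u) mod 3) ((b + cubic_index u) mod 3)"
      using mult_mem_cubic_coset_iff[OF assms(1,2)] mult_mem_cubic_coset_iff[OF assms(1,3)]
      unfolding shifted_pairs_def cyclotomic_pairs_def by simp
  qed
  moreover have "inj_on ?f (cyclotomic_pairs b a)" using assms(1) by (auto intro: inj_onI)
  ultimately show ?thesis by (simp add: card_image)
qed


lemma power_int_mod_order: "\<rho> powi j = \<rho> ^ nat (j mod int order)"
proof -
  have "\<rho> powi j = \<rho> powi (int order * (j div int order)) * \<rho> powi (j mod int order)"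
    by (metis div_mult_mod_eq mult.commute root_nonzero power_int_add)
  also have "\<rho> powi (int order * (j div int order)) = 1"
    by (simp add: power_int_mult power_order)
  also have "\<rho> powi (j mod int order) = \<rho> ^ nat (j mod int order)"
    using order_pos by (simp add: power_int_def)
  finally show ?thesis by simp
qed

lemma cubic_index_power_int: "int (cubic_index (\<rho> powi j)) = j mod 3"
proof -
  have "3 dvd int order" using three_dvd_order by presburger
  then show ?thesis
    using order_pos by (simp add: power_int_mod_order cubic_index_power zmod_int mod_mod_cancel)
qed

lemma ex_power_int_iff_mem_cubic_coset:
  assumes "i < 3"
  shows "(\<exists>j::int. v = \<rho> powi j \<and> j mod 3 = int i mod 3) \<longleftrightarrow> v \<in> cubic_coset i"
proof
  assume "\<exists>j::int. v = \<rho> powi j \<and> j mod 3 = int i mod 3"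
  then obtain j where j: "v = \<rho> powi j" "j mod 3 = int i mod 3" by blast
  then have "int (cubic_index v) = int i" using cubic_index_power_int[of j] assms by simp
  moreover have "v \<noteq> 0" using j root_nonzero by simp
  ultimately show "v \<in> cubic_coset i" by (simp add: cubic_coset_def)
next
  assume v: "v \<in> cubic_coset i"
  then obtain n where "v = \<rho> ^ n" using ex_power_eq by (auto simp: cubic_coset_def)
  moreover have "int n mod 3 = int i mod 3"
    using v \<open>v = \<rho> ^ n\<close> cubic_index_power by (auto simp: cubic_coset_def zmod_int)
  ultimately show "\<exists>j::int. v = \<rho> powi j \<and> j mod 3 = int i mod 3"
    by (metis power_int_of_nat)
qed

lemma cyc_class_eq_cubic_coset:
  assumes "6 dvd order" "i < 3"
  shows "cyc_class CARD('a) \<rho> i = cubic_coset i"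
proof -
  have "2 * ((CARD('a) - 1) div 6) = order div 3"
    using assms(1) by (auto simp: order_eq)
  then show ?thesis
    unfolding cubic_coset_eq_image[OF assms(2)] cyc_class_def by auto
qed

lemma cyc_number_eq_card_cyclotomic_pairs:
  assumes "6 dvd order" "a < 3" "b < 3"
  shows "cyc_number CARD('a) \<rho> a b = card (cyclotomic_pairs a b)"
proof -
  have "(\<lambda>x. x + 1) ` cubic_coset a \<inter> cubic_coset b = (\<lambda>x. x + 1) ` cyclotomic_pairs a b"
    by (auto simp: cyclotomic_pairs_def)
  moreover have "inj_on (\<lambda>x. x + 1) (cyclotomic_pairs a b)" by (auto intro: inj_onI)
  ultimately show ?thesis
    using assms by (simp add: cyc_number_def cyc_class_eq_cubic_coset card_image)
qed

end

definition z2_diff :: "bool \<times> bool \<Rightarrow> bool \<times> bool \<Rightarrow> bool \<times> bool" where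
  "z2_diff y w = (fst y \<noteq> fst w, snd y \<noteq> snd w)"

lemma G_minus_eq: "G_minus l (a, y, t) (b, w, v) = ((a + l - b) mod l, z2_diff y w, t - v)"
  by (cases y; cases w) (simp add: z2_diff_def)

lemma z2_diff_eq_zero_iff: "z2_diff y w = z2zero \<longleftrightarrow> y = w"
  by (cases y; cases w) (auto simp: z2_diff_def z2zero_def)

lemma z2_diff_zero_right: "z2_diff y z2zero = y"
  by (cases y) (auto simp: z2_diff_def z2zero_def)

lemma z2_diff_eq_right_iff: "z2_diff y w = w \<longleftrightarrow> y = z2zero"
  by (cases y; cases w) (auto simp: z2_diff_def z2zero_def)

lemma z2_diff_eq_left_iff: "z2_diff y w = y \<longleftrightarrow> w = z2zero"
  by (cases y; cases w) (auto simp: z2_diff_def z2zero_def)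

lemma z2_diff_diff: "z2_diff (z2_diff y w) w = y"
  by (cases y; cases w) (auto simp: z2_diff_def)

locale cayley_graph = cubic_residues \<rho> for \<rho> :: "'a::{finite,field}" +
  fixes \<pi> :: "bool \<times> bool \<Rightarrow> nat" and l :: nat
  assumes bij: "bij_betw \<pi> {z. z \<noteq> z2zero} {0..<3}"
    and l_pos: "0 < l"
begin

lemma pi_less: "z \<noteq> z2zero \<Longrightarrow> \<pi> z < 3"
  using bij by (auto simp: bij_betw_def)

lemma pi_eq_iff: "y \<noteq> z2zero \<Longrightarrow> w \<noteq> z2zero \<Longrightarrow> \<pi> y = \<pi> w \<longleftrightarrow> y = w"
  using bij unfolding bij_betw_def inj_on_def by blast

lemma ex_pi_eq:
  assumes "i < 3"
  shows "\<exists>z. z \<noteq> z2zero \<and> \<pi> z = i"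
proof -
  have "i \<in> \<pi> ` {z. z \<noteq> z2zero}" using bij assms by (simp add: bij_betw_def)
  then show ?thesis by blast
qed

(* y, z2_diff y z0 and z0 are the three non-zero elements of Z_2^2. *)
lemma pi_z2_diff:
  assumes "z0 \<noteq> z2zero" "\<pi> z0 = 0" "y \<noteq> z2zero" "y \<noteq> z0"
  shows "\<pi> y = 1 \<and> \<pi> (z2_diff y z0) = 2 \<or> \<pi> y = 2 \<and> \<pi> (z2_diff y z0) = 1"
proof -
  let ?y' = "z2_diff y z0"
  have y': "?y' \<noteq> z2zero" "?y' \<noteq> z0" "?y' \<noteq> y"
    using assms by (simp_all add: z2_diff_eq_zero_iff z2_diff_eq_right_iff z2_diff_eq_left_iff)
  then have "\<pi> y \<noteq> 0" "\<pi> ?y' \<noteq> 0" "\<pi> y \<noteq> \<pi> ?y'"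
    using assms pi_eq_iff[of y z0] pi_eq_iff[of ?y' z0] pi_eq_iff[of y ?y'] by auto
  moreover have "\<pi> y < 3" "\<pi> ?y' < 3" using assms y' pi_less by simp_all
  ultimately show ?thesis by (simp only: nat_less_three_iff) auto
qed

lemma mem_S_pi:
  "(a, z, v) \<in> S_pi l \<rho> \<pi> \<longleftrightarrow>
    (v = 0 \<and> a < l \<and> (a \<noteq> 0 \<or> z \<noteq> z2zero)) \<or> (a = 0 \<and> z \<noteq> z2zero \<and> v \<in> cubic_coset (\<pi> z))"
proof -
  have S0: "(a, z, v) \<in> S0 l \<longleftrightarrow> v = 0 \<and> a < l \<and> (a \<noteq> 0 \<or> z \<noteq> z2zero)"
    by (cases z) (auto simp: S0_def)
  have "(a, z, v) \<in> (\<Union>z \<in> {z. z \<noteq> z2zero}. Sz \<rho> \<pi> z) \<longleftrightarrow>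
      a = 0 \<and> z \<noteq> z2zero \<and> (\<exists>j::int. v = \<rho> powi j \<and> j mod 3 = int (\<pi> z) mod 3)"
    by (auto simp: Sz_def)
  then have Sz: "(a, z, v) \<in> (\<Union>z \<in> {z. z \<noteq> z2zero}. Sz \<rho> \<pi> z) \<longleftrightarrow>
      a = 0 \<and> z \<noteq> z2zero \<and> v \<in> cubic_coset (\<pi> z)"
    using ex_power_int_iff_mem_cubic_coset pi_less by blast
  show ?thesis unfolding S_pi_def Un_iff S0 Sz ..
qed

lemma mem_S_pi_zero: "(a, z, 0) \<in> S_pi l \<rho> \<pi> \<longleftrightarrow> a < l \<and> (a \<noteq> 0 \<or> z \<noteq> z2zero)"
  by (simp add: mem_S_pi cubic_coset_def)

lemma mem_S_pi_nonzero:
  "v \<noteq> 0 \<Longrightarrow> (a, z, v) \<in> S_pi l \<rho> \<pi> \<longleftrightarrow> a = 0 \<and> z \<noteq> z2zero \<and> v \<in> cubic_coset (\<pi> z)"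
  by (simp add: mem_S_pi)

lemma cay_adj_iff:
  "b < l \<Longrightarrow> cay_adj l \<rho> \<pi> (0, z, u) (b, y, t) \<longleftrightarrow> (b, z2_diff y z, t - u) \<in> S_pi l \<rho> \<pi>"
  by (simp add: cay_adj_def G_minus_eq)

definition common_neighbours :: "'a gvtx \<Rightarrow> 'a gvtx \<Rightarrow> 'a gvtx set" where
  "common_neighbours x y = {w \<in> G_carrier l. cay_adj l \<rho> \<pi> x w \<and> cay_adj l \<rho> \<pi> y w}"

lemma mem_common_neighbours_iff:
  "(b, y, t) \<in> common_neighbours (0, z2zero, 0) (0, z0, u) \<longleftrightarrow>
    b < l \<and> (b, y, t) \<in> S_pi l \<rho> \<pi> \<and> (b, z2_diff y z0, t - u) \<in> S_pi l \<rho> \<pi>"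
  by (auto simp: common_neighbours_def G_carrier_def cay_adj_iff z2_diff_zero_right)

context
  fixes z0 u
  assumes z0: "z0 \<noteq> z2zero" "\<pi> z0 = 0"
    and u: "u \<noteq> 0" "cubic_index u \<noteq> 0"
begin

(* For t \<noteq> 0 the Z_2^2-coordinate y of a common neighbour (b, y, t) is fixed by \<pi> y = cubic_index t,
   for t = 0 by \<pi> (z2_diff y z0) = cubic_index (- u). *)
lemma inj_on_snd_snd_common_neighbours:
  "inj_on (\<lambda>w. snd (snd w)) (common_neighbours (0, z2zero, 0) (0, z0, u))"
proof (rule inj_onI)
  fix w w'
  assume w: "w \<in> common_neighbours (0, z2zero, 0) (0, z0, u)"
    and w': "w' \<in> common_neighbours (0, z2zero, 0) (0, z0, u)"
    and eq: "snd (snd w) = snd (snd w')"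
  obtain b y t b' y' where ws: "w = (b, y, t)" "w' = (b', y', t)"
    using eq by (cases w; cases w') auto
  show "w = w'"
  proof (cases "t = 0")
    case True
    then have "- u \<in> cubic_coset (\<pi> (z2_diff y z0))" "- u \<in> cubic_coset (\<pi> (z2_diff y' z0))"
      "b = 0" "b' = 0" "z2_diff y z0 \<noteq> z2zero" "z2_diff y' z0 \<noteq> z2zero"
      using w w' u unfolding ws by (simp_all add: mem_common_neighbours_iff mem_S_pi_nonzero)
    then have "z2_diff y z0 = z2_diff y' z0"
      using pi_eq_iff by (auto simp: cubic_coset_def)
    then show ?thesis using \<open>b = 0\<close> \<open>b' = 0\<close> ws by (metis z2_diff_diff)
  next
    case False
    then have "t \<in> cubic_coset (\<pi> y)" "t \<in> cubic_coset (\<pi> y')"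
      "b = 0" "b' = 0" "y \<noteq> z2zero" "y' \<noteq> z2zero"
      using w w' unfolding ws by (simp_all add: mem_common_neighbours_iff mem_S_pi_nonzero)
    then show ?thesis using pi_eq_iff ws by (auto simp: cubic_coset_def)
  qed
qed

lemma image_snd_snd_common_neighbours:
  "(\<lambda>w. snd (snd w)) ` common_neighbours (0, z2zero, 0) (0, z0, u)
    = insert 0 (insert u (shifted_pairs u 1 2 \<union> shifted_pairs u 2 1))"
proof (intro equalityI subsetI)
  fix t assume "t \<in> (\<lambda>w. snd (snd w)) ` common_neighbours (0, z2zero, 0) (0, z0, u)"
  then obtain b y where w: "(b, y, t) \<in> common_neighbours (0, z2zero, 0) (0, z0, u)" by auto
  show "t \<in> insert 0 (insert u (shifted_pairs u 1 2 \<union> shifted_pairs u 2 1))"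
  proof (cases "t = 0 \<or> t = u")
    case False
    then have y: "y \<noteq> z2zero" "z2_diff y z0 \<noteq> z2zero"
      and "t \<in> cubic_coset (\<pi> y)" "t - u \<in> cubic_coset (\<pi> (z2_diff y z0))"
      using w by (simp_all add: mem_common_neighbours_iff mem_S_pi_nonzero)
    moreover have "y \<noteq> z0" using y by (simp add: z2_diff_eq_zero_iff)
    ultimately show ?thesis using pi_z2_diff[OF z0 y(1) \<open>y \<noteq> z0\<close>]
      by (auto simp: shifted_pairs_def)
  qed auto
next
  have image: "t \<in> (\<lambda>w. snd (snd w)) ` common_neighbours (0, z2zero, 0) (0, z0, u)"
    if "(0, y, t) \<in> common_neighbours (0, z2zero, 0) (0, z0, u)" for y t
    using that by force
  obtain y where y: "y \<noteq> z2zero" "\<pi> y = cubic_index u"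
    using ex_pi_eq cubic_index_less by blast
  then have "y \<noteq> z0" "u \<in> cubic_coset (\<pi> y)" using z0 u by (auto simp: cubic_coset_def)
  then have "z2_diff y z0 \<noteq> z2zero" "- u \<in> cubic_coset (\<pi> y)"
    by (simp_all add: z2_diff_eq_zero_iff minus_mem_cubic_coset_iff)
  fix t assume t: "t \<in> insert 0 (insert u (shifted_pairs u 1 2 \<union> shifted_pairs u 2 1))"
  consider "t = 0" | "t = u" | "t \<in> shifted_pairs u 1 2 \<union> shifted_pairs u 2 1" using t by blast
  then show "t \<in> (\<lambda>w. snd (snd w)) ` common_neighbours (0, z2zero, 0) (0, z0, u)"
  proof cases
    case 1
    show ?thesis
      by (rule image[of "z2_diff y z0"]) (use 1 l_pos y u \<open>z2_diff y z0 \<noteq> z2zero\<close>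
        \<open>- u \<in> cubic_coset (\<pi> y)\<close> in
        \<open>simp add: mem_common_neighbours_iff mem_S_pi_zero mem_S_pi_nonzero z2_diff_diff\<close>)
  next
    case 2
    show ?thesis
      by (rule image[of y]) (use 2 l_pos y u \<open>z2_diff y z0 \<noteq> z2zero\<close>
        \<open>u \<in> cubic_coset (\<pi> y)\<close> in
        \<open>simp add: mem_common_neighbours_iff mem_S_pi_zero mem_S_pi_nonzero\<close>)
  next
    case 3
    then have t: "t \<noteq> 0" "t - u \<noteq> 0" "cubic_index t \<noteq> 0"
      by (auto simp: shifted_pairs_def cubic_coset_def)
    obtain y' where y': "y' \<noteq> z2zero" "\<pi> y' = cubic_index t"
      using ex_pi_eq cubic_index_less by blast
    then have "y' \<noteq> z0" using z0 t by auto
    then have "\<pi> (z2_diff y' z0) = cubic_index (t - u)"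
      using 3 y' pi_z2_diff[OF z0 y'(1)] by (auto simp: shifted_pairs_def cubic_coset_def)
    moreover have "z2_diff y' z0 \<noteq> z2zero" using \<open>y' \<noteq> z0\<close> by (simp add: z2_diff_eq_zero_iff)
    ultimately show ?thesis
      by (intro image[of y']) (use t y' l_pos in
        \<open>simp add: mem_common_neighbours_iff mem_S_pi_nonzero cubic_coset_def\<close>)
  qed
qed

lemma card_common_neighbours:
  "card (common_neighbours (0, z2zero, 0) (0, z0, u))
    = card (shifted_pairs u 1 2) + card (shifted_pairs u 2 1) + 2"
proof -
  have "0 \<notin> shifted_pairs u 1 2 \<union> shifted_pairs u 2 1"
    "u \<notin> shifted_pairs u 1 2 \<union> shifted_pairs u 2 1"
    "shifted_pairs u 1 2 \<inter> shifted_pairs u 2 1 = {}"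
    by (auto simp: shifted_pairs_def cubic_coset_def)
  then have "card (insert 0 (insert u (shifted_pairs u 1 2 \<union> shifted_pairs u 2 1)))
      = card (shifted_pairs u 1 2) + card (shifted_pairs u 2 1) + 2"
    using u by (simp add: card_Un_disjoint)
  then show ?thesis
    using card_image[OF inj_on_snd_snd_common_neighbours] image_snd_snd_common_neighbours by simp
qed

end

lemma strongly_regular_imp_cyclotomic_identity:
  assumes "strongly_regular (G_carrier l) (cay_adj l \<rho> \<pi>)"
  shows "card (cyclotomic_pairs 1 0) + card (cyclotomic_pairs 0 1)
    = card (cyclotomic_pairs 2 0) + card (cyclotomic_pairs 0 2)"
proof -
  obtain mu where mu: "\<forall>x\<in>G_carrier l. \<forall>y\<in>G_carrier l.
      x \<noteq> y \<and> \<not> cay_adj l \<rho> \<pi> x y \<longrightarrow> card (common_neighbours x y) = mu"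
    using assms unfolding strongly_regular_def common_neighbours_def by blast
  obtain z0 where z0: "z0 \<noteq> z2zero" "\<pi> z0 = 0" using ex_pi_eq[of 0] by auto
  have count: "card (shifted_pairs u 1 2) + card (shifted_pairs u 2 1) + 2 = mu"
    if "u \<noteq> 0" "cubic_index u \<noteq> 0" for u
  proof -
    have "\<not> cay_adj l \<rho> \<pi> (0, z2zero, 0) (0, z0, u)"
      using that z0 l_pos
      by (simp add: cay_adj_iff mem_S_pi_nonzero z2_diff_zero_right cubic_coset_def)
    moreover have "(0, z2zero, 0) \<in> G_carrier l" "(0, z0, u) \<in> G_carrier l"
      using l_pos by (simp_all add: G_carrier_def)
    ultimately show ?thesis using mu z0 card_common_neighbours[OF z0 that] by force
  qed
  have i: "cubic_index \<rho> = 1" "cubic_index (\<rho> ^ 2) = 2"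
    using cubic_index_power[of 1] cubic_index_power[of 2] by simp_all
  have e: "(0 + 1) mod 3 = (1::nat)" "(1 + 1) mod 3 = (2::nat)"
    "(2 + 2) mod 3 = (1::nat)" "(0 + 2) mod 3 = (2::nat)" by simp_all
  have "card (shifted_pairs \<rho> 1 2) + card (shifted_pairs \<rho> 2 1)
      = card (shifted_pairs (\<rho> ^ 2) 1 2) + card (shifted_pairs (\<rho> ^ 2) 2 1)"
    using count[of \<rho>] count[of "\<rho> ^ 2"] root_nonzero i by simp
  moreover have "card (shifted_pairs \<rho> 1 2) = card (cyclotomic_pairs 1 0)"
    by (rule card_shifted_pairs[of \<rho> 0 1, unfolded i e]) (simp_all add: root_nonzero)
  moreover have "card (shifted_pairs \<rho> 2 1) = card (cyclotomic_pairs 0 1)"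
    by (rule card_shifted_pairs[of \<rho> 1 0, unfolded i e]) (simp_all add: root_nonzero)
  moreover have "card (shifted_pairs (\<rho> ^ 2) 1 2) = card (cyclotomic_pairs 0 2)"
    by (rule card_shifted_pairs[of "\<rho> ^ 2" 2 0, unfolded i e]) (simp_all add: root_nonzero)
  moreover have "card (shifted_pairs (\<rho> ^ 2) 2 1) = card (cyclotomic_pairs 2 0)"
    by (rule card_shifted_pairs[of "\<rho> ^ 2" 0 2, unfolded i e]) (simp_all add: root_nonzero)
  ultimately show ?thesis by simp
qed

end

theorem corollary4p4:
  fixes \<rho> :: "'a::{finite,field}"
    and \<pi> :: "bool \<times> bool \<Rightarrow> nat"
    and q c l :: nat
  assumes "q = card (UNIV :: 'a set)"
    and "q mod 6 = 1"
    and "primitive_element \<rho>"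
    and "bij_betw \<pi> {z. z \<noteq> z2zero} {0..<3}"
    and "c = cyc_number q \<rho> 1 2"
    and "odd c"
    and "l = (c + 1) div 2"
  shows "\<not> strongly_regular (G_carrier l :: 'a gvtx set) (cay_adj l \<rho> \<pi>)"
proof
  assume srg: "strongly_regular (G_carrier l :: 'a gvtx set) (cay_adj l \<rho> \<pi>)"
  have six: "6 dvd q - 1" using dvd_minus_mod[of 6 q] assms(2) by simp
  then have "3 dvd q - 1" by (rule dvd_trans[rotated]) simp
  then have "3 dvd CARD('a) - 1" using assms(1) by simp
  moreover have "0 < l" using odd_pos[OF assms(6)] assms(7) by simp
  ultimately interpret cayley_graph \<rho> \<pi> l
    using assms(3,4) by unfold_locales
  have "6 dvd order" using six assms(1) by (simp add: order_eq)
  then have "even (order div 3)" by auto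
  then have "even (card (cyclotomic_pairs 1 2))"
    by (rule even_cyclotomic_number_1_2[OF strongly_regular_imp_cyclotomic_identity[OF srg]])
  moreover have "c = card (cyclotomic_pairs 1 2)"
    using assms(1,5) cyc_number_eq_card_cyclotomic_pairs[OF \<open>6 dvd order\<close>] by simp
  ultimately show False using assms(6) by simp
qed
end
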